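(* Let $(S,d)$ be a finite metric space partitioned into two disjoint groups $S=S_1\cup S_2$, let $k_1,k_2$ be nonnegative integers with $k=k_1+k_2$, and let $r^*$ be the optimal radius of the fair $k$-center problem on this instance. For $l\in\{1,2\}$ let $\Gamma_l\subseteq S_l$ be a $2r^*$-independent center set of $S_l$. Suppose that for some $l\in\{1,2\}$ we have $|\Gamma_l|>k_l$ and $|\Gamma_{3-l}|\le k_{3-l}$. Define $\Gamma_l'=\{i\in\Gamma_l : d(i,\Gamma_{3-l})>3r^*\}$ and $C=\Gamma_l'\cup\Gamma_{3-l}$. Then (1) $|\Gamma_l'|\le k_l$, $|\Gamma_{3-l}|\le k_{3-l}$ and $|C|\le k$; and (2) $d(s,C)\le 5r^*$ for every $s\in S$.
   Context: The fair $k$-center problem: a set $C\subseteq S$ is feasible if $|C\cap S_l|\le k_l$ for each group $l$; its cost is $\max_{s\in S}d(s,C)$ with $d(s,C)=\min_{c\in C}d(s,c)$ (and $d(s,\emptyset)=\infty$). The optimal radius $r^*$ is the minimum cost over all feasible $C$. For $T\subseteq S$, a set $\Gamma\subseteq T$ is a $\lambda$-independent center set of $T$ if (1) $d(p,q)>\lambda$ for any two distinct $p,q\in\Gamma$, and (2) for every $p\in T$ there is $q\in\Gamma$ with $d(p,q)\le\lambda$. *)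

theory Defs
  imports "HOL-Library.Extended_Real"
begin

definition metric_on :: "'a set \<Rightarrow> ('a \<Rightarrow> 'a \<Rightarrow> real) \<Rightarrow> bool" where
  "metric_on S d \<longleftrightarrow>
     (\<forall>x\<in>S. \<forall>y\<in>S. d x y \<ge> 0 \<and> (d x y = 0 \<longleftrightarrow> x = y) \<and> d x y = d y x) \<and>
     (\<forall>x\<in>S. \<forall>y\<in>S. \<forall>z\<in>S. d x z \<le> d x y + d y z)"

text \<open>d(s,C) = min over c in C of d(s,c); equals \<infinity> when C is empty.\<close>
definition dist_set :: "('a \<Rightarrow> 'a \<Rightarrow> real) \<Rightarrow> 'a \<Rightarrow> 'a set \<Rightarrow> ereal" where
  "dist_set d s C = (INF c\<in>C. ereal (d s c))"

definition kc_cost :: "('a \<Rightarrow> 'a \<Rightarrow> real) \<Rightarrow> 'a set \<Rightarrow> 'a set \<Rightarrow> ereal" where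
  "kc_cost d S C = (SUP s\<in>S. dist_set d s C)"

definition fair_feasible :: "'a set \<Rightarrow> (nat \<Rightarrow> 'a set) \<Rightarrow> (nat \<Rightarrow> nat) \<Rightarrow> 'a set \<Rightarrow> bool" where
  "fair_feasible S Sg kg C \<longleftrightarrow>
     C \<subseteq> S \<and> card (C \<inter> Sg 1) \<le> kg 1 \<and> card (C \<inter> Sg 2) \<le> kg 2"

text \<open>Optimal radius r*: minimum cost over all feasible C (the family is finite, so the infimum is attained).\<close>
definition opt_radius :: "('a \<Rightarrow> 'a \<Rightarrow> real) \<Rightarrow> 'a set \<Rightarrow> (nat \<Rightarrow> 'a set) \<Rightarrow> (nat \<Rightarrow> nat) \<Rightarrow> ereal" where
  "opt_radius d S Sg kg = (INF C\<in>{C. fair_feasible S Sg kg C}. kc_cost d S C)"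

definition indep_center_set :: "('a \<Rightarrow> 'a \<Rightarrow> real) \<Rightarrow> ereal \<Rightarrow> 'a set \<Rightarrow> 'a set \<Rightarrow> bool" where
  "indep_center_set d lam T \<Gamma> \<longleftrightarrow>
     \<Gamma> \<subseteq> T \<and>
     (\<forall>p\<in>\<Gamma>. \<forall>q\<in>\<Gamma>. p \<noteq> q \<longrightarrow> ereal (d p q) > lam) \<and>
     (\<forall>p\<in>T. \<exists>q\<in>\<Gamma>. ereal (d p q) \<le> lam)"

end

theory Submission
  imports Defs
begin

text \<open>Write \<open>m = 3 - l\<close> and fix an optimal feasible solution \<open>C\<close> of radius \<open>r = r\<^sup>*\<close>. The centre
  of \<open>C\<close> serving a point \<open>p \<in> \<Gamma>\<^sub>l'\<close> lies in \<open>S\<^sub>l\<close>: otherwise it is within \<open>2r\<close> of \<open>\<Gamma>\<^sub>m\<close>, so that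
  \<open>d(p, \<Gamma>\<^sub>m) \<le> 3r\<close>. As the points of \<open>\<Gamma>\<^sub>l'\<close> are more than \<open>2r\<close> apart, distinct points are
  served by distinct centres, whence \<open>|\<Gamma>\<^sub>l'| \<le> |C \<inter> S\<^sub>l| \<le> k\<^sub>l\<close>. For the radius, a point of
  \<open>S\<^sub>l\<close> is within \<open>2r\<close> of some \<open>p \<in> \<Gamma>\<^sub>l\<close>, and either \<open>p \<in> \<Gamma>\<^sub>l'\<close> or \<open>p\<close> is within \<open>3r\<close> of \<open>\<Gamma>\<^sub>m\<close>.\<close>

lemma metric_on_nonneg: "metric_on S d \<Longrightarrow> x \<in> S \<Longrightarrow> y \<in> S \<Longrightarrow> 0 \<le> d x y"
  by (simp add: metric_on_def)

lemma metric_on_sym: "metric_on S d \<Longrightarrow> x \<in> S \<Longrightarrow> y \<in> S \<Longrightarrow> d x y = d y x"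
  by (simp add: metric_on_def)

lemma metric_on_triangle:
  "metric_on S d \<Longrightarrow> x \<in> S \<Longrightarrow> y \<in> S \<Longrightarrow> z \<in> S \<Longrightarrow> d x z \<le> d x y + d y z"
  by (simp add: metric_on_def)

lemma dist_set_le_ereal_iff:
  assumes "finite C"
  shows "dist_set d s C \<le> ereal r \<longleftrightarrow> (\<exists>c\<in>C. d s c \<le> r)"
proof (cases "C = {}")
  case False
  then show ?thesis
    using assms by (simp add: dist_set_def Min_Inf[symmetric] Min_le_iff)
qed (simp add: dist_set_def top_ereal_def)

lemma opt_radius_attained:
  assumes "finite S"
  obtains C where "fair_feasible S Sg kg C" and "kc_cost d S C = opt_radius d S Sg kg"
proof -
  let ?F = "{C. fair_feasible S Sg kg C}"
  have "finite ?F"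
    using assms
    by (rule finite_subset[rotated, OF finite_Pow_iff[THEN iffD2]]) (auto simp: fair_feasible_def)
  moreover have "{} \<in> ?F" by (simp add: fair_feasible_def)
  ultimately have "opt_radius d S Sg kg \<in> kc_cost d S ` ?F"
    unfolding opt_radius_def by (metis Min_Inf Min_in empty_iff finite_imageI image_is_empty)
  then show ?thesis using that by auto
qed

lemma opt_radius_nonneg:
  assumes "metric_on S d" and "S \<noteq> {}"
  shows "0 \<le> opt_radius d S Sg kg"
  unfolding opt_radius_def
proof (rule INF_greatest)
  fix C assume "C \<in> {C. fair_feasible S Sg kg C}"
  then have "C \<subseteq> S" by (simp add: fair_feasible_def)
  obtain s where "s \<in> S" using assms(2) by blast
  have "0 \<le> dist_set d s C"
    unfolding dist_set_def using metric_on_nonneg[OF assms(1) \<open>s \<in> S\<close>] \<open>C \<subseteq> S\<close>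
    by (auto intro!: INF_greatest)
  also have "\<dots> \<le> kc_cost d S C"
    unfolding kc_cost_def using \<open>s \<in> S\<close> by (rule SUP_upper)
  finally show "0 \<le> kc_cost d S C" .
qed

lemma opt_radius_cover:
  assumes "finite S" and "opt_radius d S Sg kg = ereal r"
  obtains C where "fair_feasible S Sg kg C" and "\<And>s. s \<in> S \<Longrightarrow> \<exists>c\<in>C. d s c \<le> r"
proof -
  obtain C where C: "fair_feasible S Sg kg C" "kc_cost d S C = ereal r"
    using opt_radius_attained[OF assms(1)] assms(2) by metis
  have "finite C" using C(1) assms(1) by (auto simp: fair_feasible_def intro: finite_subset)
  have "\<exists>c\<in>C. d s c \<le> r" if "s \<in> S" for s
  proof -
    have "dist_set d s C \<le> ereal r"
      using C(2) that unfolding kc_cost_def by (metis SUP_upper)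
    then show ?thesis using \<open>finite C\<close> by (simp add: dist_set_le_ereal_iff)
  qed
  then show ?thesis using that C(1) by blast
qed

lemma card_le_card_if_separated_covered:
  assumes "metric_on S d" and "P \<subseteq> S" and "C \<subseteq> S" and "finite C"
    and separated: "\<And>p q. p \<in> P \<Longrightarrow> q \<in> P \<Longrightarrow> p \<noteq> q \<Longrightarrow> 2 * r < d p q"
    and covered: "\<And>p. p \<in> P \<Longrightarrow> \<exists>c\<in>C. d p c \<le> r"
  shows "card P \<le> card C"
proof -
  obtain f where f: "\<And>p. p \<in> P \<Longrightarrow> f p \<in> C \<and> d p (f p) \<le> r"
    using covered by metis
  have "inj_on f P"
  proof (rule inj_onI, rule ccontr)
    fix p q assume pq: "p \<in> P" "q \<in> P" "f p = f q" "p \<noteq> q"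
    have S: "p \<in> S" "q \<in> S" "f p \<in> S" using f pq(1,2) assms(2,3) by auto
    have "d p q \<le> d p (f p) + d (f p) q"
      using metric_on_triangle[OF assms(1) S(1,3,2)] .
    also have "\<dots> = d p (f p) + d q (f q)"
      using metric_on_sym[OF assms(1) S(3,2)] pq(3) by simp
    also have "\<dots> \<le> 2 * r"
      using f[OF pq(1)] f[OF pq(2)] by linarith
    finally show False using separated pq by fastforce
  qed
  then show ?thesis
    using f assms(4) by (intro card_inj_on_le) auto
qed

lemma far_point_served_in_own_group:
  assumes "metric_on S d" and "B \<subseteq> S"
    and "indep_center_set d (ereal (2 * r)) B \<Gamma>\<^sub>B" and "finite \<Gamma>\<^sub>B"
    and "p \<in> S" and "c \<in> S" and "d p c \<le> r" and "ereal (3 * r) < dist_set d p \<Gamma>\<^sub>B"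
  shows "c \<notin> B"
proof
  assume "c \<in> B"
  then obtain q where q: "q \<in> \<Gamma>\<^sub>B" "d c q \<le> 2 * r"
    using assms(3) by (auto simp: indep_center_set_def)
  have "q \<in> S" using q(1) assms(2,3) by (auto simp: indep_center_set_def)
  then have "d p q \<le> 3 * r"
    using metric_on_triangle[OF assms(1,5,6) \<open>q \<in> S\<close>] assms(7) q(2) by linarith
  then have "dist_set d p \<Gamma>\<^sub>B \<le> ereal (3 * r)"
    using q(1) assms(4) by (auto simp: dist_set_le_ereal_iff)
  then show False using assms(8) by simp
qed

lemma card_far_centers_le:
  assumes "metric_on S d" and "finite S" and "S = A \<union> B"
    and "C \<subseteq> S" and "\<And>s. s \<in> S \<Longrightarrow> \<exists>c\<in>C. d s c \<le> r"
    and "indep_center_set d (ereal (2 * r)) A \<Gamma>\<^sub>A"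
    and "indep_center_set d (ereal (2 * r)) B \<Gamma>\<^sub>B"
  shows "card {p \<in> \<Gamma>\<^sub>A. ereal (3 * r) < dist_set d p \<Gamma>\<^sub>B} \<le> card (C \<inter> A)"
proof (rule card_le_card_if_separated_covered[OF assms(1)])
  have "\<Gamma>\<^sub>A \<subseteq> S" and "\<Gamma>\<^sub>B \<subseteq> S"
    using assms(3,6,7) by (auto simp: indep_center_set_def)
  then show "{p \<in> \<Gamma>\<^sub>A. ereal (3 * r) < dist_set d p \<Gamma>\<^sub>B} \<subseteq> S" by blast
  show "C \<inter> A \<subseteq> S" and "finite (C \<inter> A)"
    using assms(2,4) by (auto intro: finite_subset)
  show "2 * r < d p q" if "p \<in> {p \<in> \<Gamma>\<^sub>A. ereal (3 * r) < dist_set d p \<Gamma>\<^sub>B}"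
    and "q \<in> {p \<in> \<Gamma>\<^sub>A. ereal (3 * r) < dist_set d p \<Gamma>\<^sub>B}" and "p \<noteq> q" for p q
    using that assms(6) by (auto simp: indep_center_set_def)
  show "\<exists>c\<in>C \<inter> A. d p c \<le> r" if "p \<in> {p \<in> \<Gamma>\<^sub>A. ereal (3 * r) < dist_set d p \<Gamma>\<^sub>B}" for p
  proof -
    from that have p: "p \<in> S" "ereal (3 * r) < dist_set d p \<Gamma>\<^sub>B" using \<open>\<Gamma>\<^sub>A \<subseteq> S\<close> by auto
    then obtain c where c: "c \<in> C" "d p c \<le> r" using assms(5) by blast
    have "c \<notin> B"
      using far_point_served_in_own_group[OF assms(1) _ assms(7) _ p(1) _ c(2) p(2)]
        c(1) assms(2-4) \<open>\<Gamma>\<^sub>B \<subseteq> S\<close> by (auto intro: finite_subset)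
    then show ?thesis using c assms(3,4) by blast
  qed
qed

lemma far_centers_cover:
  assumes "metric_on S d" and "S = A \<union> B" and "finite \<Gamma>\<^sub>B" and "0 \<le> r"
    and "indep_center_set d (ereal (2 * r)) A \<Gamma>\<^sub>A"
    and "indep_center_set d (ereal (2 * r)) B \<Gamma>\<^sub>B"
    and "s \<in> S"
  shows "\<exists>c\<in>{p \<in> \<Gamma>\<^sub>A. ereal (3 * r) < dist_set d p \<Gamma>\<^sub>B} \<union> \<Gamma>\<^sub>B. d s c \<le> 5 * r"
proof (cases "s \<in> B")
  case True
  then obtain q where "q \<in> \<Gamma>\<^sub>B" "d s q \<le> 2 * r"
    using assms(6) by (auto simp: indep_center_set_def)
  then show ?thesis using assms(4) by force
next
  case False
  then obtain p where p: "p \<in> \<Gamma>\<^sub>A" "d s p \<le> 2 * r"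
    using assms(2,5,7) by (auto simp: indep_center_set_def)
  show ?thesis
  proof (cases "ereal (3 * r) < dist_set d p \<Gamma>\<^sub>B")
    case True
    then show ?thesis using p assms(4) by force
  next
    case False
    then obtain q where q: "q \<in> \<Gamma>\<^sub>B" "d p q \<le> 3 * r"
      using assms(3) by (auto simp: dist_set_le_ereal_iff not_less)
    have "p \<in> S" "q \<in> S"
      using p(1) q(1) assms(2,5,6) by (auto simp: indep_center_set_def)
    then have "d s q \<le> 5 * r"
      using metric_on_triangle[OF assms(1,7)] p(2) q(2) by fastforce
    then show ?thesis using q(1) by blast
  qed
qed

theorem theorem1:
  fixes S :: "'a set" and d :: "'a \<Rightarrow> 'a \<Rightarrow> real"
    and Sg :: "nat \<Rightarrow> 'a set" and kg :: "nat \<Rightarrow> nat"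
    and \<Gamma> :: "nat \<Rightarrow> 'a set" and l :: nat
  assumes "finite S" and "metric_on S d"
    and "S = Sg 1 \<union> Sg 2" and "Sg 1 \<inter> Sg 2 = {}"
    and "\<And>j. j \<in> {1, 2} \<Longrightarrow>
           indep_center_set d (2 * opt_radius d S Sg kg) (Sg j) (\<Gamma> j)"
    and "l \<in> {1, 2}"
    and "card (\<Gamma> l) > kg l" and "card (\<Gamma> (3 - l)) \<le> kg (3 - l)"
  shows "card {i \<in> \<Gamma> l. dist_set d i (\<Gamma> (3 - l)) > 3 * opt_radius d S Sg kg} \<le> kg l
       \<and> card (\<Gamma> (3 - l)) \<le> kg (3 - l)
       \<and> card ({i \<in> \<Gamma> l. dist_set d i (\<Gamma> (3 - l)) > 3 * opt_radius d S Sg kg} \<union> \<Gamma> (3 - l))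
            \<le> kg 1 + kg 2
       \<and> (\<forall>s\<in>S. dist_set d s
              ({i \<in> \<Gamma> l. dist_set d i (\<Gamma> (3 - l)) > 3 * opt_radius d S Sg kg} \<union> \<Gamma> (3 - l))
            \<le> 5 * opt_radius d S Sg kg)"
proof -
  define R where "R = opt_radius d S Sg kg"
  define m where "m = 3 - l"
  define G where "G = {i \<in> \<Gamma> l. 3 * R < dist_set d i (\<Gamma> m)}"
  have m: "m \<in> {1, 2}" "S = Sg l \<union> Sg m" "kg l + kg m = kg 1 + kg 2"
    using assms(3,6) by (auto simp: m_def)
  have ind: "indep_center_set d (2 * R) (Sg l) (\<Gamma> l)" "indep_center_set d (2 * R) (Sg m) (\<Gamma> m)"
    using assms(5) assms(6) m(1) by (auto simp: R_def)
  have fin: "finite (\<Gamma> l)" "finite (\<Gamma> m)"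
    using ind m(2) assms(1) by (auto simp: indep_center_set_def intro: finite_subset)
  have "card G \<le> kg l \<and> (\<forall>s\<in>S. dist_set d s (G \<union> \<Gamma> m) \<le> 5 * R)"
  proof (cases "R = \<infinity>")
    case True
    then show ?thesis by (simp add: G_def)
  next
    case False
    \<comment> \<open>The only use of \<open>|\<Gamma>\<^sub>l| > k\<^sub>l\<close>.\<close>
    have "S \<noteq> {}" using assms(7) ind(1) m(2) by (auto simp: indep_center_set_def)
    then have "0 \<le> R" using opt_radius_nonneg[OF assms(2)] by (simp add: R_def)
    then obtain r where r: "R = ereal r" "0 \<le> r" using False by (cases R) auto
    obtain C where C: "fair_feasible S Sg kg C" "\<And>s. s \<in> S \<Longrightarrow> \<exists>c\<in>C. d s c \<le> r"
      using opt_radius_cover[OF assms(1)] r(1) by (metis R_def)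
    have "card G \<le> card (C \<inter> Sg l)"
      using card_far_centers_le[OF assms(2,1) m(2) _ C(2)] C(1) ind r(1)
      by (simp add: G_def fair_feasible_def)
    also have "\<dots> \<le> kg l" using C(1) assms(6) by (auto simp: fair_feasible_def)
    finally show ?thesis
      using far_centers_cover[OF assms(2) m(2) fin(2) r(2)] ind r(1) fin
      by (auto simp: G_def dist_set_le_ereal_iff)
  qed
  then have "card G \<le> kg l \<and> card (\<Gamma> m) \<le> kg m \<and> card (G \<union> \<Gamma> m) \<le> kg 1 + kg 2
      \<and> (\<forall>s\<in>S. dist_set d s (G \<union> \<Gamma> m) \<le> 5 * R)"
    using assms(8) m(3) card_Un_le[of G "\<Gamma> m"] by (simp add: m_def)
  then show ?thesis by (simp add: G_def R_def m_def)
qed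

end
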